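(* Let $f,g\in\mathbb B(X)$ with $f$ modular in $g$, and write $s=f_{g/1}$, $t=f_{g/0}$. Then, pointwise on $2^X$ (treating the $\{0,1\}$-valued games as Boolean-valued), $$\omega_f=\omega_g\,\omega_{\overline g}\,(\omega_s\lor\omega_t)\ \lor\ \omega_g\,\overline{\omega_{\overline g}}\,\omega_s\ \lor\ \overline{\omega_g}\,\omega_{\overline g}\,\omega_t\ \lor\ \overline{\omega_g}\,\overline{\omega_{\overline g}}\,\omega_{st}.$$ If moreover $f$ is monotonically modular in $g$, then $\omega_f=\omega_g\,\omega_s\lor\overline{\omega_g}\,\omega_t$.
   Context: $X$ is a fixed finite set of variables. An assignment over $U\subseteq X$ is a map $\mathbf u:U\to\{0,1\}$; $\mathbf u;\mathbf w$ is concatenation of assignments with disjoint domains. $\mathbb B(X)$ is the set of Boolean functions $\{0,1\}^X\to\{0,1\}$, combined pointwise ($st=s\land t$, $\overline f$ negation); $f_{x/c}$ is $f$ with $x$ fixed to $c$; $\mathrm{dep}(f)=\{x:f_{x/1}\ne f_{x/0}\}$; $f[x/s]=s f_{x/1}\lor\overline s f_{x/0}$. Modularity: $f$ is modular in $g$ if $g$ is not constant and there are $\ell\in\mathbb B(X)$, $z\in X$ with $\mathrm{dep}(\ell)\cap\mathrm{dep}(g)=\emptyset$ and $f=\ell[z/g]$; monotonically modular if moreover $\ell_{z/1}\ge\ell_{z/0}$. Then $f_{g/1}:=\ell_{z/1}$ and $f_{g/0}:=\ell_{z/0}$ (well defined). The dominating CGM assigns to $f$ the game $\omega_f:2^X\to\{0,1\}$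 with $\omega_f(S)=1$ iff there is $\mathbf u\in\{0,1\}^S$ with $f(\mathbf u;\mathbf w)=1$ for all $\mathbf w\in\{0,1\}^{X\setminus S}$. *)

theory Defs
  imports Main
begin

text \<open>The variable set X is the (finite) universe of a type 'x; an assignment over X
  is a map 'x \<Rightarrow> bool, and a Boolean function is a map (('x \<Rightarrow> bool) \<Rightarrow> bool).\<close>

type_synonym 'x bfun = "('x \<Rightarrow> bool) \<Rightarrow> bool"

definition fixv :: "'x bfun \<Rightarrow> 'x \<Rightarrow> bool \<Rightarrow> 'x bfun" where
  "fixv f x c = (\<lambda>a. f (a(x := c)))"

definition dep :: "'x bfun \<Rightarrow> 'x set" where
  "dep f = {x. fixv f x True \<noteq> fixv f x False}"

definition subst :: "'x bfun \<Rightarrow> 'x \<Rightarrow> 'x bfun \<Rightarrow> 'x bfun" where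
  "subst f x s = (\<lambda>a. (s a \<and> fixv f x True a) \<or> (\<not> s a \<and> fixv f x False a))"

definition const_bfun :: "'x bfun \<Rightarrow> bool" where
  "const_bfun g = (\<exists>c. \<forall>a. g a = c)"

text \<open>Dominating CGM: omega_f(S) holds iff some assignment u on S makes f true
  for every assignment w on X - S (assignments on S are restrictions of total maps).\<close>
definition omega :: "'x bfun \<Rightarrow> 'x set \<Rightarrow> bool" where
  "omega f S = (\<exists>u. \<forall>w. f (\<lambda>x. if x \<in> S then u x else w x))"

end

theory Submission
  imports Defs
begin

text \<open>Write \<open>f = g s \<or> \<not>g t\<close> with \<open>g\<close> reading only the variables in \<open>A = dep g\<close> and
  \<open>s\<close>, \<open>t\<close> only those outside \<open>A\<close>. A fixed coalition strategy \<open>u\<close> forces \<open>f\<close> either because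
  the opponents cannot change \<open>g\<close> (then \<open>u\<close> forces \<open>g s\<close> or \<open>\<not>g t\<close>) or because they can, in which
  case splicing their moves on \<open>A\<close> with arbitrary moves elsewhere shows that \<open>u\<close> forces both
  \<open>s\<close> and \<open>t\<close>. Conversely, since the parts act on disjoint variables, strategies forcing \<open>g\<close> and
  \<open>s\<close> separately can be spliced into one forcing \<open>g s\<close>. Hence
  \<open>\<omega>\<^sub>f = \<omega>\<^sub>g \<omega>\<^sub>s \<or> \<omega>\<^sub>\<not>\<^sub>g \<omega>\<^sub>t \<or> \<omega>\<^sub>s\<^sub>t\<close>, and the case split of the theorem is
  a Boolean rearrangement of this using \<open>\<omega>\<^sub>s\<^sub>t \<le> \<omega>\<^sub>s, \<omega>\<^sub>t\<close>.\<close>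

definition depends_only_on :: "'x bfun \<Rightarrow> 'x set \<Rightarrow> bool" where
  "depends_only_on h A \<longleftrightarrow> (\<forall>a b. (\<forall>x\<in>A. a x = b x) \<longrightarrow> h a = h b)"

lemma depends_only_on_mono:
  "depends_only_on h A \<Longrightarrow> A \<subseteq> B \<Longrightarrow> depends_only_on h B"
  unfolding depends_only_on_def by blast

lemma depends_only_on_override_on_inside:
  "depends_only_on h A \<Longrightarrow> h (override_on b a A) = h a"
  unfolding depends_only_on_def override_on_def by simp

lemma depends_only_on_override_on_outside:
  "depends_only_on h (- A) \<Longrightarrow> h (override_on b a A) = h b"
  unfolding depends_only_on_def override_on_def by simp

lemma fun_upd_notin_dep:
  assumes "x \<notin> dep h"
  shows "h (a(x := c)) = h a"
proof -
  have "h (a(x := c')) = fixv h x False a" for c'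
    using assms unfolding dep_def fixv_def by (cases c') (auto simp: fun_eq_iff)
  from this[of c] this[of "a x"] show ?thesis by simp
qed

lemma depends_only_on_dep:
  fixes h :: "('x::finite) bfun"
  shows "depends_only_on h (dep h)"
proof -
  have "h a = h b" if "{x. a x \<noteq> b x} \<subseteq> D" "\<forall>x\<in>dep h. a x = b x" for D a b
    using finite[of D] that
  proof (induction D arbitrary: a rule: finite_induct)
    case empty
    then show ?case by (simp add: fun_eq_iff)
  next
    case (insert x D a)
    have "{y. (a(x := b x)) y \<noteq> b y} \<subseteq> D"
      using insert.prems(1) by auto
    moreover have "\<forall>y\<in>dep h. (a(x := b x)) y = b y"
      using insert.prems(2) by simp
    ultimately have "h (a(x := b x)) = h b"
      by (rule insert.IH)
    moreover have "h (a(x := b x)) = h a"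
    proof (cases "a x = b x")
      case True
      show ?thesis using True[symmetric] by simp
    next
      case False
      then show ?thesis using insert.prems(2) fun_upd_notin_dep[of x h a "b x"] by blast
    qed
    ultimately show ?case by simp
  qed
  then show ?thesis unfolding depends_only_on_def by blast
qed

lemma dep_fixv_subset: "dep (fixv l z c) \<subseteq> dep l"
proof
  fix x assume x: "x \<in> dep (fixv l z c)"
  show "x \<in> dep l"
  proof (rule ccontr)
    assume "x \<notin> dep l"
    then have upd: "l ((a(z := c))(x := d)) = l (a(z := c))" for a d
      by (rule fun_upd_notin_dep)
    have "fixv (fixv l z c) x d = fixv l z c" for d
    proof (cases "x = z")
      case False
      then have "(a(x := d))(z := c) = (a(z := c))(x := d)" for a
        by (rule fun_upd_twist)
      with upd show ?thesis by (simp add: fixv_def)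
    qed (simp add: fixv_def)
    then show False using x unfolding dep_def by simp
  qed
qed

lemma omega_override_on: "omega f S \<longleftrightarrow> (\<exists>u. \<forall>w. f (override_on w u S))"
  unfolding omega_def override_on_def ..

lemma omega_mono: "omega p S \<Longrightarrow> (\<And>a. p a \<Longrightarrow> q a) \<Longrightarrow> omega q S"
  unfolding omega_def by blast

lemma omega_conj_separated:
  assumes p: "depends_only_on p A" and q: "depends_only_on q (- A)"
  shows "omega (\<lambda>a. p a \<and> q a) S \<longleftrightarrow> omega p S \<and> omega q S"
proof
  assume "omega p S \<and> omega q S"
  then obtain u1 u2 where u1: "\<And>w. p (override_on w u1 S)" and u2: "\<And>w. q (override_on w u2 S)"
    unfolding omega_override_on by blast
  have "p (override_on w (override_on u2 u1 A) S) \<and> q (override_on w (override_on u2 u1 A) S)"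
    for w
  proof -
    have "p (override_on w (override_on u2 u1 A) S) = p (override_on w u1 S)"
      using p unfolding depends_only_on_def override_on_def by simp
    moreover have "q (override_on w (override_on u2 u1 A) S) = q (override_on w u2 S)"
      using q unfolding depends_only_on_def override_on_def by simp
    ultimately show ?thesis using u1 u2 by simp
  qed
  then show "omega (\<lambda>a. p a \<and> q a) S" unfolding omega_override_on by blast
qed (auto elim: omega_mono)

lemma omega_forces_both_branches:
  assumes g: "depends_only_on g A" and s: "depends_only_on s (- A)"
    and f: "\<And>w. g (override_on w u S) \<longrightarrow> s (override_on w u S)"
    and w0: "g (override_on w0 u S)"
  shows "s (override_on w u S)"
proof -
  let ?w = "override_on w w0 A"
  have "override_on ?w u S = override_on (override_on w u S) (override_on w0 u S) A"
    by (auto simp: override_on_def)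
  then show ?thesis
    using f[of ?w] w0 depends_only_on_override_on_inside[OF g]
      depends_only_on_override_on_outside[OF s] by metis
qed

theorem omega_mux:
  assumes g: "depends_only_on g A"
    and s: "depends_only_on s (- A)" and t: "depends_only_on t (- A)"
    and f: "\<And>a. f a \<longleftrightarrow> (g a \<and> s a) \<or> (\<not> g a \<and> t a)"
  shows "omega f S \<longleftrightarrow>
    (omega g S \<and> omega s S) \<or> (omega (\<lambda>a. \<not> g a) S \<and> omega t S) \<or> omega (\<lambda>a. s a \<and> t a) S"
proof -
  have not_g: "depends_only_on (\<lambda>a. \<not> g a) A"
    using g unfolding depends_only_on_def by blast
  have "omega (\<lambda>a. g a \<and> s a) S \<or> omega (\<lambda>a. \<not> g a \<and> t a) S \<or> omega (\<lambda>a. s a \<and> t a) S"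
    if "omega f S"
  proof -
    from that obtain u where u: "\<And>w. f (override_on w u S)"
      unfolding omega_override_on by blast
    consider (g_forced) "\<forall>w. g (override_on w u S)" | (not_g_forced) "\<forall>w. \<not> g (override_on w u S)"
      | (undetermined) w1 w0 where "g (override_on w1 u S)" "\<not> g (override_on w0 u S)"
      by blast
    then show ?thesis
    proof cases
      case undetermined
      have "s (override_on w u S) \<and> t (override_on w u S)" for w
        using omega_forces_both_branches[OF g s _ undetermined(1)]
          omega_forces_both_branches[OF not_g t _ undetermined(2)] u f by blast
      then show ?thesis unfolding omega_override_on by blast
    qed (use u f in \<open>auto simp: omega_override_on\<close>)
  qed
  moreover have "omega f S" if "omega (\<lambda>a. g a \<and> s a) S \<or> omega (\<lambda>a. \<not> g a \<and> t a) S
      \<or> omega (\<lambda>a. s a \<and> t a) S"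
    using that by (auto simp: f elim: omega_mono)
  ultimately show ?thesis
    using omega_conj_separated[OF g s] omega_conj_separated[OF not_g t] by blast
qed

theorem mainTheorem13:
  fixes f g l :: "('x::finite) bfun" and z :: 'x
  assumes g_nonconst: "\<not> const_bfun g"
    and disj: "dep l \<inter> dep g = {}"
    and f_eq: "f = subst l z g"
  defines "s \<equiv> fixv l z True"
    and "t \<equiv> fixv l z False"
  shows "(\<forall>S. omega f S =
            ((omega g S \<and> omega (\<lambda>a. \<not> g a) S \<and> (omega s S \<or> omega t S)) \<or>
             (omega g S \<and> \<not> omega (\<lambda>a. \<not> g a) S \<and> omega s S) \<or>
             (\<not> omega g S \<and> omega (\<lambda>a. \<not> g a) S \<and> omega t S) \<or>
             (\<not> omega g S \<and> \<not> omega (\<lambda>a. \<not> g a) S \<and> omega (\<lambda>a. s a \<and> t a) S)))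
         \<and> ((\<forall>a. t a \<longrightarrow> s a) \<longrightarrow>
            (\<forall>S. omega f S = ((omega g S \<and> omega s S) \<or> (\<not> omega g S \<and> omega t S))))"
proof -
  have outside: "depends_only_on (fixv l z c) (- dep g)" for c
    by (rule depends_only_on_mono[OF depends_only_on_dep]) (use dep_fixv_subset[of l z c] disj in blast)
  have mux: "omega f S \<longleftrightarrow> (omega g S \<and> omega s S) \<or> (omega (\<lambda>a. \<not> g a) S \<and> omega t S)
      \<or> omega (\<lambda>a. s a \<and> t a) S" for S
    unfolding s_def t_def
    by (rule omega_mux[OF depends_only_on_dep outside outside]) (simp add: f_eq subst_def)
  have "omega (\<lambda>a. s a \<and> t a) S \<Longrightarrow> omega s S \<and> omega t S" for S
    by (auto elim: omega_mono)
  moreover have "omega t S \<Longrightarrow> omega (\<lambda>a. s a \<and> t a) S" if "\<forall>a. t a \<longrightarrow> s a" for S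
    using that by (auto elim: omega_mono)
  ultimately show ?thesis using mux by blast
qed

end
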